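(* Let $f:\mathbb{R}^n\times\mathbb{R}^m\to\mathbb{R}^n$ be a polynomial map and let $\boldsymbol\psi:\mathbb{R}^n\to\mathbb{R}^m$ be a Lipschitz continuous function whose graph satisfies \[ \{(x,\boldsymbol\psi(x)) : x\in\mathbb{R}^n\} = \{(x,u)\mid \exists\,\lambda\in\mathbb{R}^{n_\lambda}\ \text{s.t.}\ g(x,u,\lambda)\ge0,\ h(x,u,\lambda)=0\} \] for vector-valued polynomial maps $g,h$. Assume there exists $W\in C^2(\mathbb{R}^n)$ such that for all $x\in\mathbb{R}^n$, \[ W(f(x,\boldsymbol\psi(x))) - W(x)\le -\|x\|_2^2,\qquad W(x)\ge\|x\|_2^2. \] Let $\mathbf{X}\subset\mathbb{R}^n$ be compact and let \[ \mathbf{K}' = \{(x,x^+)\in\mathbb{R}^{2n}\mid x\in\mathbf{X},\ \exists\,(u,\lambda)\ \text{s.t.}\ g(x,u,\lambda)\ge0,\ h(x,u,\lambda)=0,\ x^+=f(x,u)\}. \] Then there exists a polynomial $V:\mathbb{R}^n\to\mathbb{R}$ such that for all $(x,x^+)\in\mathbf{K}'$, \[ V(x^+)-V(x)\le-\|x\|_2^2,\qquad V(x)\ge\|x\|_2^2. \] *)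

theory Defs
  imports "HOL-Analysis.Analysis"
begin

inductive polyfun :: "('a::euclidean_space \<Rightarrow> real) \<Rightarrow> bool" where
  const: "polyfun (\<lambda>x. c)"
| coord: "b \<in> Basis \<Longrightarrow> polyfun (\<lambda>x. x \<bullet> b)"
| add: "polyfun p \<Longrightarrow> polyfun q \<Longrightarrow> polyfun (\<lambda>x. p x + q x)"
| mult: "polyfun p \<Longrightarrow> polyfun q \<Longrightarrow> polyfun (\<lambda>x. p x * q x)"

definition polymap :: "('a::euclidean_space \<Rightarrow> real ^ 'k) \<Rightarrow> bool" where
  "polymap F \<longleftrightarrow> (\<forall>i. polyfun (\<lambda>x. F x $ i))"

definition C2_fun :: "('a::euclidean_space \<Rightarrow> real) \<Rightarrow> bool" where
  "C2_fun W \<longleftrightarrow> (\<exists>(W' :: 'a \<Rightarrow> ('a \<Rightarrow>\<^sub>L real)) (W'' :: 'a \<Rightarrow> ('a \<Rightarrow>\<^sub>L ('a \<Rightarrow>\<^sub>L real))).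
     (\<forall>x. (W has_derivative blinfun_apply (W' x)) (at x)) \<and>
     (\<forall>x. (W' has_derivative blinfun_apply (W'' x)) (at x)) \<and>
     continuous_on UNIV W'')"

end

theory Submission
  imports Defs
begin

text \<open>On \<open>K'\<close> only the closed-loop map \<open>F x = f (x, \<psi> x)\<close> matters, because the graph
condition forces \<open>u = \<psi> x\<close>. Iterating the decrease of \<open>W\<close> along the orbit of the origin
shows \<open>F 0 = 0\<close>; since \<open>f\<close> is polynomial and \<open>\<psi>\<close> Lipschitz, \<open>|F x| \<le> C |x|\<close> on \<open>X\<close>.
Taylor's formula writes \<open>W\<close> as its second-order Taylor polynomial at \<open>0\<close> plus \<open>|x|\<^sup>2 \<phi> x\<close>
with \<open>\<phi>\<close> continuous; replacing \<open>\<phi>\<close> by a Stone-Weierstrass approximation within \<open>\<delta>\<close> gives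
a polynomial \<open>P\<close> with \<open>|P - W| \<le> \<delta> |x|\<^sup>2\<close> on \<open>X \<union> F X\<close>. For \<open>\<delta> = 1 / (2 (C\<^sup>2 + 1))\<close>
the polynomial \<open>V = 2 P\<close> absorbs this error in both Lyapunov inequalities.\<close>

lemma polyfun_sum:
  "finite S \<Longrightarrow> (\<And>i. i \<in> S \<Longrightarrow> polyfun (f i)) \<Longrightarrow> polyfun (\<lambda>x. \<Sum>i\<in>S. f i x)"
  by (induction S rule: finite_induct) (auto intro: polyfun.intros)

lemma polyfun_iff_real_polynomial_function:
  fixes p :: "'a::euclidean_space \<Rightarrow> real"
  shows "polyfun p \<longleftrightarrow> real_polynomial_function p"
proof
  assume "polyfun p"
  then show "real_polynomial_function p"
    by (induction rule: polyfun.induct) (auto intro: bounded_linear_inner_left)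
next
  assume "real_polynomial_function p"
  then show "polyfun p"
  proof (induction rule: real_polynomial_function.induct)
    case (linear f)
    have "f x = (\<Sum>b\<in>Basis. (x \<bullet> b) * f b)" for x
      using Linear_Algebra.linear_componentwise[OF bounded_linear.linear[OF linear], of x 1] by simp
    then have "f = (\<lambda>x. \<Sum>b\<in>Basis. (x \<bullet> b) * f b)"
      by (rule ext)
    moreover have "polyfun (\<lambda>x. \<Sum>b\<in>Basis. (x \<bullet> b) * f b)"
      by (intro polyfun_sum finite_Basis polyfun.mult polyfun.coord polyfun.const)
    ultimately show ?case by simp
  qed (auto intro: polyfun.intros)
qed

lemma real_polynomial_function_blinfun_quadratic_form:
  fixes H :: "'a::euclidean_space \<Rightarrow>\<^sub>L ('a \<Rightarrow>\<^sub>L real)"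
  shows "real_polynomial_function (\<lambda>x. H x x)"
proof -
  have "H x x = (\<Sum>b\<in>Basis. (x \<bullet> b) * H b x)" for x
  proof -
    have "H x = (\<Sum>b\<in>Basis. (x \<bullet> b) *\<^sub>R H b)"
      by (subst euclidean_representation[of x, symmetric])
        (simp only: blinfun.sum_right blinfun.scaleR_right)
    then show ?thesis
      by (simp add: blinfun.sum_left blinfun.scaleR_left)
  qed
  moreover have "real_polynomial_function (\<lambda>x. \<Sum>b\<in>Basis. (x \<bullet> b) * H b x)"
    by (intro real_polynomial_function_sum real_polynomial_function.intros bounded_linear_inner_left
        blinfun.bounded_linear_right finite_Basis)
  ultimately show ?thesis
    by simp
qed

lemma real_polynomial_function_norm_power2:
  "real_polynomial_function (\<lambda>x::'a::euclidean_space. (norm x)\<^sup>2)"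
proof -
  have "(norm x)\<^sup>2 = (\<Sum>b\<in>Basis. (x \<bullet> b) * (x \<bullet> b))" for x :: 'a
    by (simp only: power2_norm_eq_inner euclidean_inner[of x x])
  moreover have "real_polynomial_function (\<lambda>x::'a. \<Sum>b\<in>Basis. (x \<bullet> b) * (x \<bullet> b))"
    by (intro real_polynomial_function_sum real_polynomial_function.intros bounded_linear_inner_left finite_Basis)
  ultimately show ?thesis
    by simp
qed

lemma lipschitz_on_mult:
  fixes p q :: "'a::metric_space \<Rightarrow> 'b::real_normed_algebra"
  assumes p: "L-lipschitz_on S p" and q: "M-lipschitz_on S q"
    and p_bound: "\<And>x. x \<in> S \<Longrightarrow> norm (p x) \<le> A" and q_bound: "\<And>x. x \<in> S \<Longrightarrow> norm (q x) \<le> B"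
    and "0 \<le> A" "0 \<le> B"
  shows "(A * M + B * L)-lipschitz_on S (\<lambda>x. p x * q x)"
proof (rule lipschitz_onI)
  fix x y assume xy: "x \<in> S" "y \<in> S"
  have "p x * q x - p y * q y = p x * (q x - q y) + (p x - p y) * q y"
    by (simp add: algebra_simps)
  then have "dist (p x * q x) (p y * q y) \<le> norm (p x) * dist (q x) (q y) + dist (p x) (p y) * norm (q y)"
    by (metis dist_norm norm_mult_ineq norm_triangle_le add_mono)
  also have "\<dots> \<le> A * (M * dist x y) + (L * dist x y) * B"
    using xy assms lipschitz_on_nonneg[OF p]
    by (intro add_mono mult_mono lipschitz_onD[OF p] lipschitz_onD[OF q]) auto
  finally show "dist (p x * q x) (p y * q y) \<le> (A * M + B * L) * dist x y"
    by (simp add: algebra_simps)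
next
  show "0 \<le> A * M + B * L"
    using assms lipschitz_on_nonneg[OF p] lipschitz_on_nonneg[OF q] by simp
qed

lemma real_polynomial_function_lipschitz_on:
  fixes p :: "'a::euclidean_space \<Rightarrow> real"
  assumes "real_polynomial_function p" and S: "bounded S"
  shows "\<exists>L. L-lipschitz_on S p"
  using assms(1)
proof (induction rule: real_polynomial_function.induct)
  case (linear f)
  then show ?case by (meson bounded_linear.lipschitz_boundE)
next
  case (const c)
  then show ?case using lipschitz_on_constant by blast
next
  case (add p q)
  then show ?case using lipschitz_on_add by blast
next
  case (mult p q)
  have bounded_on_S: "\<exists>A>0. \<forall>x\<in>S. norm (r x) \<le> A" if "real_polynomial_function r" for r
  proof -
    have "compact (r ` closure S)"
      using that S by (intro compact_continuous_image continuous_on_polymonial_function)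
        (simp_all add: real_polynomial_function_eq compact_closure)
    then have "bounded (r ` S)"
      using closure_subset by (rule bounded_subset[OF compact_imp_bounded image_mono])
    then show ?thesis by (simp add: bounded_pos)
  qed
  obtain A where "A > 0" "\<forall>x\<in>S. norm (p x) \<le> A"
    using bounded_on_S[OF mult.hyps(1)] by blast
  moreover obtain B where "B > 0" "\<forall>x\<in>S. norm (q x) \<le> B"
    using bounded_on_S[OF mult.hyps(2)] by blast
  moreover obtain Lp Lq where "Lp-lipschitz_on S p" "Lq-lipschitz_on S q"
    using mult.IH by blast
  ultimately have "(A * Lq + B * Lp)-lipschitz_on S (\<lambda>x. p x * q x)"
    by (intro lipschitz_on_mult) auto
  then show ?case ..
qed

lemma polymap_lipschitz_on:
  fixes f :: "'a::euclidean_space \<Rightarrow> real ^ 'k"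
  assumes "polymap f" and "bounded S"
  shows "\<exists>L. L-lipschitz_on S f"
proof -
  have "\<forall>i. \<exists>L. L-lipschitz_on S (\<lambda>x. f x $ i)"
    using assms(1) real_polynomial_function_lipschitz_on[OF _ assms(2)]
    unfolding polymap_def polyfun_iff_real_polynomial_function by blast
  then obtain L where L: "\<And>i. (L i)-lipschitz_on S (\<lambda>x. f x $ i)"
    by metis
  have "(\<Sum>i\<in>UNIV. L i)-lipschitz_on S f"
  proof (rule lipschitz_onI)
    fix x y assume "x \<in> S" "y \<in> S"
    have "dist (f x) (f y) \<le> (\<Sum>i\<in>UNIV. dist (f x $ i) (f y $ i))"
      using norm_le_l1_cart[of "f x - f y"] by (simp add: dist_norm dist_real_def)
    also have "\<dots> \<le> (\<Sum>i\<in>UNIV. L i * dist x y)"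
      using \<open>x \<in> S\<close> \<open>y \<in> S\<close> by (intro sum_mono lipschitz_onD[OF L])
    finally show "dist (f x) (f y) \<le> (\<Sum>i\<in>UNIV. L i) * dist x y"
      by (simp add: sum_distrib_right)
  qed (intro sum_nonneg lipschitz_on_nonneg[OF L])
  then show ?thesis ..
qed

lemma lipschitz_on_polymap_along_graph:
  fixes f :: "('a::euclidean_space \<times> 'b::euclidean_space) \<Rightarrow> real ^ 'k"
  assumes "polymap f" and "L-lipschitz_on UNIV \<psi>" and "compact S"
  shows "\<exists>C. C-lipschitz_on S (\<lambda>x. f (x, \<psi> x))"
proof -
  have graph: "(sqrt (1 + L\<^sup>2))-lipschitz_on S (\<lambda>x. (x, \<psi> x))"
    using lipschitz_on_Pair[OF lipschitz_on_id lipschitz_on_subset[OF assms(2)]] by simp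
  then have "compact ((\<lambda>x. (x, \<psi> x)) ` S)"
    using assms(3) by (intro compact_continuous_image lipschitz_on_continuous_on)
  then obtain Lf where "Lf-lipschitz_on ((\<lambda>x. (x, \<psi> x)) ` S) f"
    using polymap_lipschitz_on[OF assms(1) compact_imp_bounded] by blast
  then show ?thesis using lipschitz_on_compose2[OF graph] by blast
qed

lemma polymap_along_lipschitz_graph_linear_growth:
  fixes f :: "('a::euclidean_space \<times> 'b::euclidean_space) \<Rightarrow> real ^ 'k"
  assumes "polymap f" and "L-lipschitz_on UNIV \<psi>" and "compact S" and "f (0, \<psi> 0) = 0"
  obtains C where "\<And>x. x \<in> S \<Longrightarrow> norm (f (x, \<psi> x)) \<le> C * norm x"
    and "compact ((\<lambda>x. f (x, \<psi> x)) ` S)"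
proof -
  obtain C where C: "C-lipschitz_on (insert 0 S) (\<lambda>x. f (x, \<psi> x))"
    using lipschitz_on_polymap_along_graph[OF assms(1,2) compact_insert[OF assms(3)]] by blast
  have "norm (f (x, \<psi> x)) \<le> C * norm x" if "x \<in> S" for x
    using lipschitz_onD[OF C, of x 0] assms(4) that by (simp add: dist_norm)
  moreover have "compact ((\<lambda>x. f (x, \<psi> x)) ` S)"
    using assms(3) lipschitz_on_continuous_on[OF lipschitz_on_subset[OF C]]
    by (intro compact_continuous_image) auto
  ultimately show ?thesis
    using that by blast
qed

lemma lyapunov_orbit_bound:
  fixes F :: "'a::real_normed_vector \<Rightarrow> 'a"
  assumes dec: "\<forall>x. W (F x) - W x \<le> - (norm x)\<^sup>2"
  shows "W ((F ^^ k) x) + (\<Sum>j<k. (norm ((F ^^ j) x))\<^sup>2) \<le> W x"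
proof (induction k)
  case (Suc k)
  then show ?case using dec[rule_format, of "(F ^^ k) x"] by simp
qed simp

lemma lyapunov_fixes_origin:
  fixes F :: "'a::real_normed_vector \<Rightarrow> 'a"
  assumes cont: "isCont W 0" and dec: "\<forall>x. W (F x) - W x \<le> - (norm x)\<^sup>2"
    and nonneg: "\<forall>x. 0 \<le> W x"
  shows "F 0 = 0"
proof -
  define s where "s k = (F ^^ k) 0" for k
  have bound: "W (s k) + (\<Sum>j<k. (norm (s j))\<^sup>2) \<le> W 0" for k
    unfolding s_def by (rule lyapunov_orbit_bound[OF dec])
  have "(\<Sum>j\<le>k. (norm (s j))\<^sup>2) \<le> W 0" for k
    using bound[of "Suc k"] nonneg[rule_format, of "s (Suc k)"] by (simp add: lessThan_Suc_atMost)
  then have "summable (\<lambda>j. (norm (s j))\<^sup>2)"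
    by (intro bounded_imp_summable) auto
  then have "(\<lambda>j. sqrt ((norm (s j))\<^sup>2)) \<longlonglongrightarrow> sqrt 0"
    by (intro tendsto_real_sqrt summable_LIMSEQ_zero)
  then have "s \<longlonglongrightarrow> 0"
    by (simp add: tendsto_norm_zero_iff)
  then have lim: "(\<lambda>j. W (s j)) \<longlonglongrightarrow> W 0"
    by (rule isCont_tendsto_compose[OF cont])
  have "W (s j) \<le> W 0 - (norm (s 1))\<^sup>2" if "2 \<le> j" for j
  proof -
    have "(norm (s 1))\<^sup>2 \<le> (\<Sum>i<j. (norm (s i))\<^sup>2)"
      using that by (intro member_le_sum) auto
    then show ?thesis using bound[of j] by simp
  qed
  then have "W 0 \<le> W 0 - (norm (s 1))\<^sup>2"
    by (intro tendsto_upperbound[OF lim]) (auto intro!: eventually_sequentiallyI[of 2])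
  then show ?thesis by (simp add: s_def)
qed

context
  fixes W :: "'a::real_normed_vector \<Rightarrow> real"
    and W' :: "'a \<Rightarrow> ('a \<Rightarrow>\<^sub>L real)"
    and W'' :: "'a \<Rightarrow> ('a \<Rightarrow>\<^sub>L ('a \<Rightarrow>\<^sub>L real))"
  assumes W'_deriv: "\<And>x. (W has_derivative blinfun_apply (W' x)) (at x)"
    and W''_deriv: "\<And>x. (W' has_derivative blinfun_apply (W'' x)) (at x)"
begin

lemma Maclaurin_second_order_ray:
  "\<exists>t. 0 < t \<and> t < 1 \<and> W x = W 0 + W' 0 x + W'' (t *\<^sub>R x) x x / 2"
proof -
  define D :: "nat \<Rightarrow> real \<Rightarrow> real" where
    "D m = (\<lambda>t. if m = 0 then W (t *\<^sub>R x) else if m = 1 then W' (t *\<^sub>R x) x else W'' (t *\<^sub>R x) x x)"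
    for m
  have ray: "((\<lambda>t::real. t *\<^sub>R x) has_derivative (\<lambda>h. h *\<^sub>R x)) (at t)" for t
    by (intro derivative_eq_intros) auto
  have "((\<lambda>t. W (t *\<^sub>R x)) has_derivative (\<lambda>h. W' (t *\<^sub>R x) (h *\<^sub>R x))) (at t)" for t
    using has_derivative_compose[OF ray W'_deriv] by simp
  then have D0: "DERIV (D 0) t :> D 1 t" for t
    unfolding D_def by (auto intro: has_derivative_imp_has_field_derivative simp: blinfun.scaleR_right)
  have "((\<lambda>t. W' (t *\<^sub>R x) x) has_derivative (\<lambda>h. W'' (t *\<^sub>R x) (h *\<^sub>R x) x)) (at t)" for t
    using bounded_linear.has_derivative[OF blinfun.bounded_linear_left has_derivative_compose[OF ray W''_deriv]]
    by simp
  then have D1: "DERIV (D 1) t :> D 2 t" for t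
    unfolding D_def
    by (auto intro: has_derivative_imp_has_field_derivative simp: blinfun.scaleR_right blinfun.scaleR_left)
  have "\<forall>m t. m < 2 \<and> 0 \<le> t \<and> t \<le> 1 \<longrightarrow> DERIV (D m) t :> D (Suc m) t"
    using D0 D1 by (auto simp: numeral_2_eq_2 less_Suc_eq)
  then obtain t where "0 < t" "t < 1"
    "D 0 1 = (\<Sum>m<2. D m 0 / fact m * 1 ^ m) + D 2 t / fact 2 * 1 ^ 2"
    using Maclaurin[of 1 2 D] by auto
  then show ?thesis
    by (auto simp: D_def numeral_2_eq_2)
qed

lemma second_order_Taylor_remainder_bound:
  assumes "isCont W'' 0" and "0 < e"
  shows "\<exists>d>0. \<forall>x. norm x < d \<longrightarrow> \<bar>W x - W 0 - W' 0 x - W'' 0 x x / 2\<bar> \<le> e * (norm x)\<^sup>2"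
proof -
  obtain d where "0 < d" and d: "\<And>y. dist y 0 < d \<Longrightarrow> dist (W'' y) (W'' 0) < e"
    using assms unfolding continuous_at_eps_delta by blast
  have "\<bar>W x - W 0 - W' 0 x - W'' 0 x x / 2\<bar> \<le> e * (norm x)\<^sup>2" if x: "norm x < d" for x
  proof -
    obtain t where t: "0 < t" "t < 1" "W x = W 0 + W' 0 x + W'' (t *\<^sub>R x) x x / 2"
      using Maclaurin_second_order_ray by blast
    let ?D = "W'' (t *\<^sub>R x) - W'' 0"
    have "norm (t *\<^sub>R x) \<le> norm x"
      using t by (simp add: mult_left_le_one_le)
    then have "norm ?D \<le> e"
      using d x by (simp add: dist_norm less_imp_le)
    have "W x - W 0 - W' 0 x - W'' 0 x x / 2 = ?D x x / 2"
      unfolding t(3) by (simp add: blinfun.diff_left diff_divide_distrib)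
    also have "\<bar>\<dots>\<bar> \<le> norm ?D * norm x * norm x / 2"
    proof -
      have "\<bar>?D x x\<bar> \<le> norm (?D x) * norm x"
        using norm_blinfun[of "?D x" x] by simp
      also have "\<dots> \<le> norm ?D * norm x * norm x"
        by (intro mult_right_mono norm_blinfun) simp
      finally show ?thesis by simp
    qed
    also have "\<dots> \<le> e * (norm x)\<^sup>2 / 2"
      using mult_right_mono[OF \<open>norm ?D \<le> e\<close>, of "norm x * norm x"]
      by (simp add: power2_eq_square mult.assoc)
    also have "\<dots> \<le> e * (norm x)\<^sup>2"
      using \<open>0 < e\<close> by simp
    finally show ?thesis .
  qed
  with \<open>0 < d\<close> show ?thesis by blast
qed

text \<open>At \<open>0\<close> the quotient takes the junk value \<open>0 / 0 = 0\<close>, which is also its limit there.\<close>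

lemma continuous_on_second_order_remainder_quotient:
  assumes "isCont W'' 0"
  shows "continuous_on S (\<lambda>x. (W x - W 0 - W' 0 x - W'' 0 x x / 2) / (norm x)\<^sup>2)"
proof -
  let ?r = "\<lambda>x. W x - W 0 - W' 0 x - W'' 0 x x / 2"
  have "isCont (\<lambda>x. ?r x / (norm x)\<^sup>2) x" for x
  proof (cases "x = 0")
    case False
    have "isCont W x"
      using W'_deriv has_derivative_continuous by blast
    moreover have "isCont (\<lambda>y. W' 0 y) x"
      by (rule linear_continuous_at[OF blinfun.bounded_linear_right])
    moreover have "isCont (\<lambda>y. W'' 0 y y) x"
      by (rule blinfun.continuous[OF linear_continuous_at[OF blinfun.bounded_linear_right] continuous_ident])
    ultimately show ?thesis
      using False by (intro continuous_intros) simp_all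
  next
    case True
    have "(\<lambda>x. ?r x / (norm x)\<^sup>2) \<midarrow>0\<rightarrow> 0"
    proof (rule LIM_I)
      fix \<epsilon> :: real assume "0 < \<epsilon>"
      then obtain d where "0 < d" and d: "\<forall>x. norm x < d \<longrightarrow> \<bar>?r x\<bar> \<le> \<epsilon> / 2 * (norm x)\<^sup>2"
        using second_order_Taylor_remainder_bound[OF assms, of "\<epsilon> / 2"] by auto
      have "\<bar>?r x / (norm x)\<^sup>2\<bar> < \<epsilon>" if "x \<noteq> 0" "norm x < d" for x
      proof -
        have "\<bar>?r x / (norm x)\<^sup>2\<bar> \<le> \<epsilon> / 2"
          using d that by (simp add: abs_divide pos_divide_le_eq)
        then show ?thesis using \<open>0 < \<epsilon>\<close> by linarith
      qed
      with \<open>0 < d\<close> show "\<exists>s>0. \<forall>x. x \<noteq> 0 \<and> norm (x - 0) < s \<longrightarrow> norm (?r x / (norm x)\<^sup>2 - 0) < \<epsilon>"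
        by auto
    qed
    with True show ?thesis
      by (simp add: isCont_def)
  qed
  then show ?thesis
    by (simp add: continuous_at_imp_continuous_on)
qed

end

lemma C2_fun_relative_polynomial_approximation:
  fixes W :: "'a::euclidean_space \<Rightarrow> real"
  assumes "C2_fun W" and "compact S" and "0 < \<delta>"
  obtains P where "real_polynomial_function P" "\<And>x. x \<in> S \<Longrightarrow> \<bar>P x - W x\<bar> \<le> \<delta> * (norm x)\<^sup>2"
proof -
  obtain W' :: "'a \<Rightarrow> ('a \<Rightarrow>\<^sub>L real)" and W'' where
    d1: "\<forall>x. (W has_derivative blinfun_apply (W' x)) (at x)" and
    d2: "\<forall>x. (W' has_derivative blinfun_apply (W'' x)) (at x)" and
    "continuous_on UNIV W''"
    using assms(1) unfolding C2_fun_def by blast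
  then have "isCont W'' 0"
    by (simp add: continuous_on_eq_continuous_at)
  define r where "r x = W x - W 0 - W' 0 x - W'' 0 x x / 2" for x
  have "continuous_on S (\<lambda>x. r x / (norm x)\<^sup>2)"
    unfolding r_def
    by (rule continuous_on_second_order_remainder_quotient[OF d1[rule_format] d2[rule_format] \<open>isCont W'' 0\<close>])
  then obtain p where p: "real_polynomial_function p"
    and p_approx: "\<And>x. x \<in> S \<Longrightarrow> \<bar>r x / (norm x)\<^sup>2 - p x\<bar> < \<delta>"
    using Stone_Weierstrass_real_polynomial_function assms(2,3) by blast
  define P where "P x = W 0 + W' 0 x + W'' 0 x x / 2 + (norm x)\<^sup>2 * p x" for x
  have "real_polynomial_function P"
    unfolding P_def
    by (intro real_polynomial_function.intros blinfun.bounded_linear_right real_polynomial_function_divide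
        real_polynomial_function_blinfun_quadratic_form real_polynomial_function_norm_power2 p)
  moreover have "\<bar>P x - W x\<bar> \<le> \<delta> * (norm x)\<^sup>2" if "x \<in> S" for x
  proof (cases "x = 0")
    case False
    have "P x - W x = (norm x)\<^sup>2 * (p x - r x / (norm x)\<^sup>2)"
      using False by (simp add: P_def r_def field_simps)
    then have "\<bar>P x - W x\<bar> = (norm x)\<^sup>2 * \<bar>r x / (norm x)\<^sup>2 - p x\<bar>"
      by (simp add: abs_mult abs_minus_commute)
    also have "\<dots> \<le> (norm x)\<^sup>2 * \<delta>"
      using p_approx[OF that] by (intro mult_left_mono) auto
    finally show ?thesis
      by (simp add: mult.commute)
  qed (simp add: P_def)
  ultimately show ?thesis
    using that by blast
qed

lemma lyapunov_decrease_relative_perturbation: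
  fixes W P :: "'a::real_normed_vector \<Rightarrow> real"
  assumes dec: "W y - W x \<le> - (norm x)\<^sup>2" and pos: "(norm x)\<^sup>2 \<le> W x"
    and growth: "norm y \<le> C * norm x" and \<delta>_def: "\<delta> = 1 / (2 * (C\<^sup>2 + 1))"
    and Px: "\<bar>P x - W x\<bar> \<le> \<delta> * (norm x)\<^sup>2" and Py: "\<bar>P y - W y\<bar> \<le> \<delta> * (norm y)\<^sup>2"
  shows "2 * P y - 2 * P x \<le> - (norm x)\<^sup>2 \<and> (norm x)\<^sup>2 \<le> 2 * P x"
proof -
  have "0 < C\<^sup>2 + 1"
    using zero_le_power2[of C] by linarith
  then have "0 \<le> \<delta>" and \<delta>: "2 * \<delta> * (C\<^sup>2 + 1) = 1"
    unfolding \<delta>_def by simp_all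
  have "(norm y)\<^sup>2 \<le> C\<^sup>2 * (norm x)\<^sup>2"
    using growth by (metis norm_ge_zero power_mono power_mult_distrib)
  then have y_error: "\<delta> * (norm y)\<^sup>2 \<le> \<delta> * C\<^sup>2 * (norm x)\<^sup>2"
    using \<open>0 \<le> \<delta>\<close> by (simp add: mult_left_mono mult.assoc)
  have "2 * (\<delta> * C\<^sup>2 * (norm x)\<^sup>2) + 2 * (\<delta> * (norm x)\<^sup>2) = 2 * \<delta> * (C\<^sup>2 + 1) * (norm x)\<^sup>2"
    by (simp add: algebra_simps)
  then have error_split: "2 * (\<delta> * C\<^sup>2 * (norm x)\<^sup>2) + 2 * (\<delta> * (norm x)\<^sup>2) = (norm x)\<^sup>2"
    using \<delta> by simp
  have "0 \<le> \<delta> * C\<^sup>2 * (norm x)\<^sup>2"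
    using \<open>0 \<le> \<delta>\<close> by simp
  with Px Py y_error error_split dec pos show ?thesis
    by (simp add: abs_le_iff)
qed

theorem theorem4:
  fixes f :: "(real ^ 'n) \<times> (real ^ 'm) \<Rightarrow> real ^ 'n"
    and \<psi> :: "real ^ 'n \<Rightarrow> real ^ 'm"
    and g :: "(real ^ 'n) \<times> (real ^ 'm) \<times> (real ^ 'l) \<Rightarrow> real ^ 'p"
    and h :: "(real ^ 'n) \<times> (real ^ 'm) \<times> (real ^ 'l) \<Rightarrow> real ^ 'q"
    and W :: "real ^ 'n \<Rightarrow> real"
    and X :: "(real ^ 'n) set"
  assumes f_poly: "polymap f"
    and g_poly: "polymap g"
    and h_poly: "polymap h"
    and \<psi>_lip: "\<exists>L. L-lipschitz_on UNIV \<psi>"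
    and graph: "{(x, \<psi> x) | x. True} =
                {(x, u). \<exists>lam. (\<forall>i. g (x, u, lam) $ i \<ge> 0) \<and> h (x, u, lam) = 0}"
    and W_C2: "C2_fun W"
    and W_dec: "\<forall>x. W (f (x, \<psi> x)) - W x \<le> - (norm x)\<^sup>2"
    and W_pos: "\<forall>x. W x \<ge> (norm x)\<^sup>2"
    and X_compact: "compact X"
  shows "\<exists>V :: real ^ 'n \<Rightarrow> real. polyfun V \<and>
           (\<forall>(x, xp) \<in> {(x, xp). x \<in> X \<and> (\<exists>u lam. (\<forall>i. g (x, u, lam) $ i \<ge> 0) \<and>
                                  h (x, u, lam) = 0 \<and> xp = f (x, u))}.
              V xp - V x \<le> - (norm x)\<^sup>2 \<and> V x \<ge> (norm x)\<^sup>2)"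
proof -
  define F where "F x = f (x, \<psi> x)" for x
  have W_nonneg: "\<forall>x. 0 \<le> W x"
    using W_pos by (meson order_trans zero_le_power2)
  have "isCont W 0"
    using W_C2 has_derivative_continuous unfolding C2_fun_def by blast
  then have F0: "F 0 = 0"
    using lyapunov_fixes_origin W_dec[folded F_def] W_nonneg by blast
  obtain L where L: "L-lipschitz_on UNIV \<psi>"
    using \<psi>_lip ..
  obtain C where growth: "\<And>x. x \<in> X \<Longrightarrow> norm (F x) \<le> C * norm x" and "compact (F ` X)"
    using polymap_along_lipschitz_graph_linear_growth[OF f_poly L X_compact F0[unfolded F_def]]
    unfolding F_def by blast
  then have "compact (X \<union> F ` X)"
    using X_compact by (intro compact_Un)
  moreover define \<delta> where "\<delta> = 1 / (2 * (C\<^sup>2 + 1))"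
  moreover have "0 < \<delta>"
    unfolding \<delta>_def by (simp add: add_nonneg_pos)
  ultimately obtain P where P: "real_polynomial_function P"
    and approx: "\<And>x. x \<in> X \<union> F ` X \<Longrightarrow> \<bar>P x - W x\<bar> \<le> \<delta> * (norm x)\<^sup>2"
    using C2_fun_relative_polynomial_approximation[OF W_C2] by blast
  have "2 * P (F x) - 2 * P x \<le> - (norm x)\<^sup>2 \<and> (norm x)\<^sup>2 \<le> 2 * P x" if "x \<in> X" for x
    using lyapunov_decrease_relative_perturbation[OF W_dec[folded F_def, rule_format] W_pos[rule_format]
        growth[OF that] \<delta>_def] approx that by blast
  moreover have "polyfun (\<lambda>x. 2 * P x)"
    unfolding polyfun_iff_real_polynomial_function by (intro real_polynomial_function.intros P)
  moreover have "u = \<psi> x" if "\<forall>i. g (x, u, lam) $ i \<ge> 0" and "h (x, u, lam) = 0" for x u lam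
    using graph that by blast
  ultimately show ?thesis
    unfolding F_def by (intro exI[of _ "\<lambda>x. 2 * P x"]) auto
qed

end
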